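(* Let $a,b>0$, $n\in\mathbb{N}$, $k_n=\frac{\pi n}{a}$, and assume $\sin(k_nb)\neq0$. Put $$\gamma_n^\pm=\pm2k_n\Big(\tan\frac{k_nb}{2}\Big)^{\pm1}.$$ Then $k_n^2$ belongs to the interior of $\sigma(\mathscr{H}_{\gamma_n^+})$ and to the interior of $\sigma(\mathscr{H}_{\gamma_n^-})$.
   Context: Let $\Gamma$ be the rectangular lattice quantum graph in $\mathbb{R}^2$ with vertex set $\{(ma,nb):m,n\in\mathbb{Z}\}$, horizontal edges of length $a$ and vertical edges of length $b$ joining nearest neighbours. For $\gamma\in\mathbb{R}$, $\mathscr{H}_\gamma$ is the self-adjoint operator in $L^2(\Gamma)$ acting as $-\frac{d^2}{dx^2}$ on each edge with a $\delta$-coupling of strength $\gamma$ at every vertex $v$ ($\psi$ continuous at $v$, sum of outward derivatives at $v$ equal to $\gamma\psi(v)$). Equivalently, for $k>0$ with $\sin(kb)\ne0$, $k^2\in\sigma(\mathscr{H}_\gamma)$ iff $\left|\frac{\gamma\sin ka}{2k}+\frac{\sin k(a+b)}{\sin kb}\right|\le1+\left|\frac{\sin ka}{\sin kb}\right|$. *)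

theory Defs
  imports "HOL-Analysis.Analysis"
begin

text \<open>Spectral condition for the rectangular lattice quantum graph with
delta-coupling of strength gamma at the vertices (edge lengths a, b), for k > 0
with sin(k b) /= 0.\<close>
definition lattice_band_cond :: "real \<Rightarrow> real \<Rightarrow> real \<Rightarrow> real \<Rightarrow> bool" where
  "lattice_band_cond a b \<gamma> k \<longleftrightarrow>
     \<bar>\<gamma> * sin (k * a) / (2 * k) + sin (k * (a + b)) / sin (k * b)\<bar>
       \<le> 1 + \<bar>sin (k * a) / sin (k * b)\<bar>"

text \<open>The part of the spectrum of H_gamma consisting of energies E = k^2 with
k > 0 and sin(k b) /= 0, as given by the characterization in the context.
It agrees with the full spectrum on every neighbourhood avoiding energies
E <= 0 and E = (m pi / b)^2.\<close>
definition lattice_spec :: "real \<Rightarrow> real \<Rightarrow> real \<Rightarrow> real set" where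
  "lattice_spec a b \<gamma> =
     {E. \<exists>k>0. E = k\<^sup>2 \<and> sin (k * b) \<noteq> 0 \<and> lattice_band_cond a b \<gamma> k}"

end

theory Submission
  imports Defs
begin

text \<open>At \<open>k\<^sub>n = \<pi> n / a\<close> we have \<open>sin (k\<^sub>n a) = 0\<close>, so the band condition holds with
  equality; the point is that it survives on a neighbourhood of \<open>k\<^sub>n\<close>.
  Put \<open>F k = \<gamma> sin (k b) / (2 k) + cos (k b)\<close>. For \<open>\<gamma> = \<gamma>\<^sub>n\<^sup>+\<close> (resp. \<open>\<gamma>\<^sub>n\<^sup>-\<close>) one has
  \<open>F k = \<epsilon> + \<beta> k * sin (k b)\<close> with \<open>\<epsilon> = 1\<close>, \<open>\<beta> k = \<gamma> / (2 k) - tan (k b / 2)\<close>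
  (resp. \<open>\<epsilon> = -1\<close>, \<open>\<beta> k = \<gamma> / (2 k) + cot (k b / 2)\<close>) and \<open>\<beta> k\<^sub>n = 0\<close>.
  With \<open>p = a (k - k\<^sub>n)\<close> the band condition then reduces, by the triangle inequality, to
  \<open>\<bar>cos p + \<beta> k sin p\<bar> \<le> 1\<close>, and since \<open>1 - cos p - \<beta> sin p = sin p (tan (p/2) - \<beta>)\<close>
  this holds near \<open>k\<^sub>n\<close> as soon as \<open>tan (a (k - k\<^sub>n) / 2) - \<beta> k\<close> has a positive
  derivative at \<open>k\<^sub>n\<close>, i.e. \<open>\<beta>' k\<^sub>n < a / 2\<close>. For both couplings
  \<open>\<beta>' k\<^sub>n = -(X \<pm> sin X cos X) / (k\<^sub>n c\<^sup>2)\<close> with \<open>X = k\<^sub>n b / 2\<close> and \<open>c = cos X\<close>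
  resp. \<open>sin X\<close>, which is \<open>\<le> 0\<close> because \<open>\<bar>sin X cos X\<bar> \<le> X\<close>.\<close>

lemma sin_half_cos_half_nonzero:
  fixes x :: real
  assumes "sin x \<noteq> 0"
  shows "sin (x / 2) \<noteq> 0" and "cos (x / 2) \<noteq> 0"
  using assms sin_double[of "x / 2"] by auto

lemma tan_half_mult_sin:
  fixes x :: real
  assumes "cos (x / 2) \<noteq> 0"
  shows "tan (x / 2) * sin x = 1 - cos x"
  using assms sin_double[of "x / 2"] cos_double_sin[of "x / 2"]
  by (simp add: tan_def power2_eq_square field_simps)

lemma cot_half_mult_sin:
  fixes x :: real
  assumes "sin (x / 2) \<noteq> 0"
  shows "cot (x / 2) * sin x = 1 + cos x"
  using assms sin_double[of "x / 2"] cos_double_cos[of "x / 2"]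
  by (simp add: cot_def power2_eq_square field_simps)

lemma abs_sin_mult_cos_le:
  fixes x :: real
  assumes "0 \<le> x"
  shows "\<bar>sin x * cos x\<bar> \<le> x"
proof -
  have "\<bar>sin x * cos x\<bar> \<le> \<bar>sin x\<bar>"
    by (simp add: abs_mult mult_left_le)
  also have "\<dots> \<le> x"
    using abs_sin_x_le_abs_x[of x] assms by simp
  finally show ?thesis .
qed

lemma cos_add_mult_sin_le_one:
  fixes p \<beta> :: real
  assumes "\<bar>p\<bar> < pi" and "0 \<le> p * (tan (p / 2) - \<beta>)"
  shows "cos p + \<beta> * sin p \<le> 1"
proof -
  have "cos (p / 2) \<noteq> 0"
    using assms(1) by (intro cos_gt_zero_pi[THEN less_imp_neq, symmetric]) auto
  then have gap: "1 - (cos p + \<beta> * sin p) = sin p * (tan (p / 2) - \<beta>)"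
    using tan_half_mult_sin[of p] by (simp add: algebra_simps)
  have "0 \<le> sin p * (tan (p / 2) - \<beta>)"
  proof (cases "0 \<le> p")
    case True
    then have "0 \<le> sin p" using assms(1) by (intro sin_ge_zero) auto
    moreover have "p = 0 \<or> 0 \<le> tan (p / 2) - \<beta>"
      using True assms(2) by (auto simp: zero_le_mult_iff)
    ultimately show ?thesis by auto
  next
    case False
    then have "sin p \<le> 0" using assms(1) sin_ge_zero[of "- p"] by auto
    moreover have "tan (p / 2) - \<beta> \<le> 0"
      using False assms(2) by (auto simp: zero_le_mult_iff)
    ultimately show ?thesis by (simp add: mult_nonpos_nonpos)
  qed
  then show ?thesis using gap by linarith
qed

lemma eventually_nhds_deriv_pos_sign:
  fixes f :: "real \<Rightarrow> real"
  assumes "(f has_real_derivative l) (at x)" and "0 < l"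
  shows "\<forall>\<^sub>F y in nhds x. 0 \<le> (y - x) * (f y - f x)"
proof -
  obtain d1 where "0 < d1" and right: "\<And>h. 0 < h \<Longrightarrow> h < d1 \<Longrightarrow> f x < f (x + h)"
    using DERIV_pos_inc_right[OF assms] by blast
  obtain d2 where "0 < d2" and left: "\<And>h. 0 < h \<Longrightarrow> h < d2 \<Longrightarrow> f (x - h) < f x"
    using DERIV_pos_inc_left[OF assms] by blast
  show ?thesis
    unfolding eventually_nhds_metric
  proof (intro exI conjI allI impI)
    show "0 < min d1 d2" using \<open>0 < d1\<close> \<open>0 < d2\<close> by simp
  next
    fix y assume "dist y x < min d1 d2"
    then show "0 \<le> (y - x) * (f y - f x)"
      using right[of "y - x"] left[of "x - y"]
      by (cases rule: linorder_cases[of x y]) (auto simp: dist_real_def zero_le_mult_iff)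
  qed
qed

lemma lattice_band_condI:
  fixes a b \<gamma> k kn \<epsilon> \<beta> :: real
  assumes "k \<noteq> 0" and "sin (k * b) \<noteq> 0" and "sin (kn * a) = 0"
    and split: "\<gamma> / (2 * k) * sin (k * b) + cos (k * b) = \<epsilon> + \<beta> * sin (k * b)"
    and "\<bar>\<epsilon>\<bar> \<le> 1"
    and bound: "\<bar>cos (a * (k - kn)) + \<beta> * sin (a * (k - kn))\<bar> \<le> 1"
  shows "lattice_band_cond a b \<gamma> k"
proof -
  define p where "p = a * (k - kn)"
  define \<sigma> where "\<sigma> = cos (kn * a)"
  define S where "S = sin (k * b)"
  define w where "w = cos p + \<beta> * sin p"
  have "\<bar>\<sigma>\<bar> = 1"
    using assms(3) sin_cos_squared_add[of "kn * a"] by (simp add: \<sigma>_def abs_square_eq_1)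
  have ka: "k * a = kn * a + p" by (simp add: p_def algebra_simps)
  have sin_ka: "sin (k * a) = \<sigma> * sin p" and cos_ka: "cos (k * a) = \<sigma> * cos p"
    unfolding ka sin_add cos_add using assms(3) by (simp_all add: \<sigma>_def)
  have "\<gamma> * sin (k * a) / (2 * k) + sin (k * (a + b)) / sin (k * b)
      = \<sigma> * (sin p * (\<gamma> / (2 * k) * S + cos (k * b)) + cos p * S) / S"
    using assms(1,2) unfolding distrib_left sin_add sin_ka cos_ka S_def
    by (simp add: field_simps)
  also have "\<dots> = \<sigma> * (\<epsilon> * sin p + w * S) / S"
    unfolding split S_def w_def by (simp add: algebra_simps)
  finally have lhs: "\<bar>\<gamma> * sin (k * a) / (2 * k) + sin (k * (a + b)) / sin (k * b)\<bar>
      = \<bar>\<epsilon> * sin p + w * S\<bar> / \<bar>S\<bar>"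
    using \<open>\<bar>\<sigma>\<bar> = 1\<close> by (simp add: abs_mult)
  have "\<bar>\<epsilon> * sin p + w * S\<bar> \<le> \<bar>sin p\<bar> + \<bar>S\<bar>"
    using assms(5) bound unfolding w_def p_def[symmetric]
    by (intro abs_triangle_ineq[THEN order_trans] add_mono)
       (auto simp: abs_mult mult_left_le_one_le mult_left_le)
  moreover have "1 + \<bar>sin (k * a) / sin (k * b)\<bar> = (\<bar>sin p\<bar> + \<bar>S\<bar>) / \<bar>S\<bar>"
    using assms(2) \<open>\<bar>\<sigma>\<bar> = 1\<close> unfolding sin_ka S_def by (simp add: abs_mult field_simps)
  ultimately show ?thesis
    unfolding lattice_band_cond_def lhs by (simp add: divide_right_mono)
qed

lemma eventually_lattice_band_cond:
  fixes a b \<gamma> kn \<epsilon> \<beta>' :: real and \<beta> :: "real \<Rightarrow> real"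
  assumes "0 < a" and "0 < kn" and "sin (kn * a) = 0" and "sin (kn * b) \<noteq> 0"
    and "\<bar>\<epsilon>\<bar> \<le> 1"
    and split: "\<And>k. 0 < k \<Longrightarrow> sin (k * b) \<noteq> 0 \<Longrightarrow>
                  \<gamma> / (2 * k) * sin (k * b) + cos (k * b) = \<epsilon> + \<beta> k * sin (k * b)"
    and "\<beta> kn = 0" and "(\<beta> has_real_derivative \<beta>') (at kn)" and "\<beta>' < a / 2"
  shows "\<forall>\<^sub>F k in nhds kn. 0 < k \<and> sin (k * b) \<noteq> 0 \<and> lattice_band_cond a b \<gamma> k"
proof -
  define \<psi> where "\<psi> k = tan (a * (k - kn) / 2) - \<beta> k" for k
  define w where "w k = cos (a * (k - kn)) + \<beta> k * sin (a * (k - kn))" for k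
  have "(\<psi> has_real_derivative a / 2 - \<beta>') (at kn)"
    unfolding \<psi>_def using assms(8) by (auto intro!: derivative_eq_intros)
  then have "\<forall>\<^sub>F k in nhds kn. 0 \<le> (k - kn) * (\<psi> k - \<psi> kn)"
    using assms(9) by (intro eventually_nhds_deriv_pos_sign) auto
  moreover have "\<psi> kn = 0" using assms(7) by (simp add: \<psi>_def)
  ultimately have sign: "\<forall>\<^sub>F k in nhds kn. 0 \<le> (k - kn) * \<psi> k"
    by simp
  have id_lim: "((\<lambda>k. k) \<longlongrightarrow> kn) (nhds kn)"
    by (rule filterlim_ident)
  have sin_lim: "((\<lambda>k. sin (k * b)) \<longlongrightarrow> sin (kn * b)) (nhds kn)"
    by (intro tendsto_intros id_lim)
  have "isCont w kn"
    unfolding w_def using DERIV_isCont[OF assms(8)] by (intro continuous_intros)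
  then have "(w \<longlongrightarrow> 1) (nhds kn)"
    using tendsto_at_iff_tendsto_nhds[of w kn] by (simp add: isCont_def w_def)
  then have "\<forall>\<^sub>F k in nhds kn. -1 < w k"
    by (rule order_tendstoD) simp
  moreover have "\<forall>\<^sub>F k in nhds kn. 0 < k"
    using id_lim assms(2) by (rule order_tendstoD)
  moreover have "\<forall>\<^sub>F k in nhds kn. sin (k * b) \<noteq> 0"
    using sin_lim assms(4) by (rule tendsto_imp_eventually_ne)
  moreover have "\<forall>\<^sub>F k in nhds kn. \<bar>a * (k - kn)\<bar> < pi"
    by (rule order_tendstoD[where y = 0]) (auto intro!: tendsto_eq_intros id_lim)
  ultimately show ?thesis
    using sign
  proof eventually_elim
    case (elim k)
    have "0 \<le> a * (k - kn) * (tan (a * (k - kn) / 2) - \<beta> k)"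
      using elim(5) assms(1) by (simp add: \<psi>_def mult.assoc)
    then have "w k \<le> 1"
      unfolding w_def by (rule cos_add_mult_sin_le_one[OF elim(4)])
    then have "\<bar>w k\<bar> \<le> 1" using elim(1) by linarith
    then have "lattice_band_cond a b \<gamma> k"
      using elim(2) unfolding w_def
      by (intro lattice_band_condI[OF _ elim(3) assms(3) split[OF elim(2,3)] assms(5)]) auto
    then show ?case using elim(2,3) by blast
  qed
qed

lemma sq_mem_interior_lattice_spec:
  fixes a b \<gamma> kn :: real
  assumes "0 < kn"
    and "\<forall>\<^sub>F k in nhds kn. 0 < k \<and> sin (k * b) \<noteq> 0 \<and> lattice_band_cond a b \<gamma> k"
  shows "kn\<^sup>2 \<in> interior (lattice_spec a b \<gamma>)"
proof -
  have "filterlim sqrt (nhds kn) (nhds (kn\<^sup>2))"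
    using tendsto_real_sqrt[OF filterlim_ident[of "nhds (kn\<^sup>2)"]] assms(1) by simp
  then have "\<forall>\<^sub>F E in nhds (kn\<^sup>2).
      0 < sqrt E \<and> sin (sqrt E * b) \<noteq> 0 \<and> lattice_band_cond a b \<gamma> (sqrt E)"
    using assms(2) by (rule filterlim_iff[THEN iffD1, rule_format])
  then have "\<forall>\<^sub>F E in nhds (kn\<^sup>2). E \<in> lattice_spec a b \<gamma>"
  proof eventually_elim
    case (elim E)
    then have "E = (sqrt E)\<^sup>2" by simp
    then show ?case using elim unfolding lattice_spec_def by blast
  qed
  then show ?thesis
    unfolding eventually_nhds interior_def by blast
qed

lemma mem_interior_lattice_spec_tan:
  fixes a b kn :: real
  assumes "0 < a" and "0 < b" and "0 < kn" and "sin (kn * a) = 0" and "sin (kn * b) \<noteq> 0"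
  shows "kn\<^sup>2 \<in> interior (lattice_spec a b (2 * kn * tan (kn * b / 2)))"
proof -
  define X where "X = kn * b / 2"
  define \<gamma> where "\<gamma> = 2 * kn * tan X"
  have "cos X \<noteq> 0"
    using sin_half_cos_half_nonzero(2)[OF assms(5)] by (simp add: X_def)
  have "\<bar>sin X * cos X\<bar> \<le> X"
    using assms(2,3) by (intro abs_sin_mult_cos_le) (simp add: X_def)
  have "\<forall>\<^sub>F k in nhds kn. 0 < k \<and> sin (k * b) \<noteq> 0 \<and> lattice_band_cond a b \<gamma> k"
  proof (rule eventually_lattice_band_cond[OF assms(1,3,4,5), where \<epsilon> = 1
        and \<beta> = "\<lambda>k. \<gamma> / (2 * k) - tan (k * b / 2)"
        and \<beta>' = "- (sin X * cos X + X) / (kn * (cos X)\<^sup>2)"])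
    fix k :: real
    assume "0 < k" and "sin (k * b) \<noteq> 0"
    then show "\<gamma> / (2 * k) * sin (k * b) + cos (k * b)
        = 1 + (\<gamma> / (2 * k) - tan (k * b / 2)) * sin (k * b)"
      using tan_half_mult_sin[OF sin_half_cos_half_nonzero(2)] by (simp add: algebra_simps)
  next
    show "\<gamma> / (2 * kn) - tan (kn * b / 2) = 0"
      using assms(3) by (simp add: \<gamma>_def X_def)
  next
    have "((\<lambda>k. \<gamma> / (2 * k) - tan (k * b / 2)) has_real_derivative
        - \<gamma> / (2 * kn\<^sup>2) - b / 2 / (cos X)\<^sup>2) (at kn)"
      using assms(3) \<open>cos X \<noteq> 0\<close> unfolding X_def
      by (auto intro!: derivative_eq_intros simp: power2_eq_square field_simps)
    moreover have "- \<gamma> / (2 * kn\<^sup>2) - b / 2 / (cos X)\<^sup>2 = - (sin X * cos X + X) / (kn * (cos X)\<^sup>2)"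
      using assms(3) \<open>cos X \<noteq> 0\<close> unfolding \<gamma>_def X_def
      by (simp add: tan_def power2_eq_square field_simps)
    ultimately show "((\<lambda>k. \<gamma> / (2 * k) - tan (k * b / 2)) has_real_derivative
        - (sin X * cos X + X) / (kn * (cos X)\<^sup>2)) (at kn)"
      by simp
  next
    have "0 \<le> (sin X * cos X + X) / (kn * (cos X)\<^sup>2)"
      using \<open>\<bar>sin X * cos X\<bar> \<le> X\<close> assms(3) by (intro divide_nonneg_nonneg) auto
    then show "- (sin X * cos X + X) / (kn * (cos X)\<^sup>2) < a / 2"
      using assms(1) unfolding minus_divide_left by linarith
  qed simp
  then show ?thesis
    using sq_mem_interior_lattice_spec assms(3) unfolding \<gamma>_def X_def by blast
qed

lemma mem_interior_lattice_spec_cot: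
  fixes a b kn :: real
  assumes "0 < a" and "0 < b" and "0 < kn" and "sin (kn * a) = 0" and "sin (kn * b) \<noteq> 0"
  shows "kn\<^sup>2 \<in> interior (lattice_spec a b (- 2 * kn / tan (kn * b / 2)))"
proof -
  define X where "X = kn * b / 2"
  define \<gamma> where "\<gamma> = - 2 * kn / tan X"
  have "sin X \<noteq> 0" and "cos X \<noteq> 0"
    using sin_half_cos_half_nonzero[OF assms(5)] by (simp_all add: X_def)
  have "\<bar>sin X * cos X\<bar> \<le> X"
    using assms(2,3) by (intro abs_sin_mult_cos_le) (simp add: X_def)
  have "\<forall>\<^sub>F k in nhds kn. 0 < k \<and> sin (k * b) \<noteq> 0 \<and> lattice_band_cond a b \<gamma> k"
  proof (rule eventually_lattice_band_cond[OF assms(1,3,4,5), where \<epsilon> = "-1"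
        and \<beta> = "\<lambda>k. \<gamma> / (2 * k) + cot (k * b / 2)"
        and \<beta>' = "(sin X * cos X - X) / (kn * (sin X)\<^sup>2)"])
    fix k :: real
    assume "0 < k" and "sin (k * b) \<noteq> 0"
    then show "\<gamma> / (2 * k) * sin (k * b) + cos (k * b)
        = -1 + (\<gamma> / (2 * k) + cot (k * b / 2)) * sin (k * b)"
      using cot_half_mult_sin[OF sin_half_cos_half_nonzero(1)] by (simp add: algebra_simps)
  next
    have "\<gamma> / (2 * kn) + cot X = 0"
      using assms(3) \<open>sin X \<noteq> 0\<close> \<open>cos X \<noteq> 0\<close> unfolding \<gamma>_def cot_def tan_def
      by (simp add: field_simps)
    then show "\<gamma> / (2 * kn) + cot (kn * b / 2) = 0"
      by (simp add: X_def)
  next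
    have "((\<lambda>k. cot (k * b / 2)) has_real_derivative - inverse ((sin X)\<^sup>2) * (b / 2)) (at kn)"
      using \<open>sin X \<noteq> 0\<close> unfolding X_def
      by (intro DERIV_chain2[OF DERIV_cot]) (auto intro!: derivative_eq_intros)
    then have "((\<lambda>k. \<gamma> / (2 * k) + cot (k * b / 2)) has_real_derivative
        - \<gamma> / (2 * kn\<^sup>2) - b / 2 / (sin X)\<^sup>2) (at kn)"
      using assms(3) by (auto intro!: derivative_eq_intros simp: power2_eq_square field_simps)
    moreover have "- \<gamma> / (2 * kn\<^sup>2) - b / 2 / (sin X)\<^sup>2 = (sin X * cos X - X) / (kn * (sin X)\<^sup>2)"
      using assms(3) \<open>sin X \<noteq> 0\<close> \<open>cos X \<noteq> 0\<close> unfolding \<gamma>_def X_def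
      by (simp add: tan_def power2_eq_square field_simps)
    ultimately show "((\<lambda>k. \<gamma> / (2 * k) + cot (k * b / 2)) has_real_derivative
        (sin X * cos X - X) / (kn * (sin X)\<^sup>2)) (at kn)"
      by simp
  next
    have "(sin X * cos X - X) / (kn * (sin X)\<^sup>2) \<le> 0"
      using \<open>\<bar>sin X * cos X\<bar> \<le> X\<close> assms(3) by (intro divide_nonpos_nonneg) auto
    then show "(sin X * cos X - X) / (kn * (sin X)\<^sup>2) < a / 2"
      using assms(1) by linarith
  qed simp
  then show ?thesis
    using sq_mem_interior_lattice_spec assms(3) unfolding \<gamma>_def X_def by blast
qed

theorem lemma3p14:
  fixes a b :: real and n :: nat
  assumes "a > 0" and "b > 0"
    and "sin (pi * real n / a * b) \<noteq> 0"
  shows "(pi * real n / a)\<^sup>2 \<in>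
           interior (lattice_spec a b (2 * (pi * real n / a) * tan (pi * real n / a * b / 2)))
       \<and> (pi * real n / a)\<^sup>2 \<in>
           interior (lattice_spec a b (- 2 * (pi * real n / a) / tan (pi * real n / a * b / 2)))"
proof -
  have "n \<noteq> 0" using assms(3) by (cases "n = 0") auto
  then have pos: "0 < pi * real n / a" using assms(1) by simp
  have node: "sin (pi * real n / a * a) = 0"
    using assms(1) by (simp add: sin_npi mult.commute)
  show ?thesis
    using mem_interior_lattice_spec_tan[OF assms(1,2) pos node assms(3)]
      mem_interior_lattice_spec_cot[OF assms(1,2) pos node assms(3)] by blast
qed

end
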